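(* Consider momentum gradient flow with parameter $\lambda>0$ on a 2-layer diagonal linear network as described in the context. Assume $u_t,v_t\in L^\infty(0,\infty)$ and that $\Delta_\infty=\lim_{t\to\infty}\Delta_t$ has all coordinates nonzero. Then the limit $\lim_{t\to\infty}\int_0^t\nabla L(\theta_s)\,\mathrm{d}s=\int_0^\infty\nabla L(\theta_t)\,\mathrm{d}t$ exists, and consequently $\lim_{t\to\infty}\int_0^t\nabla L(\theta_s)e^{-\frac{t-s}{\lambda}}\,\mathrm{d}s=0$.
   Context: Data $x_1,\dots,x_n\in\mathbb{R}^d$, $y\in\mathbb{R}^n$, loss $L(\theta)=\frac{1}{2n}\sum_{i=1}^n(y_i-\langle x_i,\theta\rangle)^2$. Momentum gradient flow on the diagonal linear network: $(u_t,v_t)$ solves $\lambda\ddot u_t+\dot u_t+\nabla L(\theta_t)\odot v_t=0$, $\lambda\ddot v_t+\dot v_t+\nabla L(\theta_t)\odot u_t=0$, $\theta_t=u_t\odot v_t$, with $\dot u_0=\dot v_0=0$ and $|u_0^2-v_0^2|$ having all coordinates nonzero. $\Delta_t=|u_t^2-v_t^2|$ coordinate-wise. *)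

theory Defs
  imports "HOL-Analysis.Analysis"
begin

definition lossL :: "('n::finite \<Rightarrow> real^'d::finite) \<Rightarrow> ('n \<Rightarrow> real) \<Rightarrow> real^'d \<Rightarrow> real" where
  "lossL x y \<theta> = (1 / (2 * real CARD('n))) * (\<Sum>i\<in>UNIV. (y i - x i \<bullet> \<theta>)\<^sup>2)"

definition gradL :: "('n::finite \<Rightarrow> real^'d::finite) \<Rightarrow> ('n \<Rightarrow> real) \<Rightarrow> real^'d \<Rightarrow> real^'d" where
  "gradL x y \<theta> = - ((1 / real CARD('n)) *\<^sub>R (\<Sum>i\<in>UNIV. (y i - x i \<bullet> \<theta>) *\<^sub>R x i))"

lemma gradL_is_gradient: "GDERIV (lossL x y) \<theta> :> gradL x y \<theta>"
  unfolding gderiv_def lossL_def gradL_def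
  apply (rule derivative_eq_intros refl)+
  apply (simp add: inner_sum_left inner_diff_left algebra_simps power2_eq_square sum_distrib_left sum_subtractf fun_eq_iff inner_commute)
  apply (simp add: inner_sum_right sum_divide_distrib add_divide_distrib mult.commute mult.left_commute)
  done

end

theory Submission
  imports Defs
begin

text \<open>The energy \<open>L(\<theta>) + \<lambda>/2 (\<bar>u'\<bar>\<^sup>2 + \<bar>v'\<bar>\<^sup>2)\<close> decreases at rate \<open>\<bar>u'\<bar>\<^sup>2 + \<bar>v'\<bar>\<^sup>2\<close>,
  so by Barbalat's lemma first \<open>u', v'\<close> and then \<open>u'', v''\<close> tend to \<open>0\<close>.  The equations of
  motion then give \<open>\<nabla>L(\<theta>) \<odot> u \<rightarrow> 0\<close> and \<open>\<nabla>L(\<theta>) \<odot> v \<rightarrow> 0\<close>, hence \<open>\<nabla>L(\<theta>) \<rightarrow> 0\<close>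
  because \<open>\<Delta>\<^sub>\<infinity>\<close> has no zero coordinate.  This already gives the second claim.

  For the first, write \<open>G(t) = \<integral>\<^sub>0\<^sup>t \<nabla>L(\<theta>\<^sub>s) ds\<close>.  Coordinatewise, \<open>w = u + v\<close> and
  \<open>z = u - v\<close> solve \<open>\<lambda> w'' + w' + G' w = 0\<close> and \<open>\<lambda> z'' + z' - G' z = 0\<close>, and a Lyapunov
  argument shows that \<open>G + \<rho>\<close> converges to some \<open>K\<close>, where \<open>\<rho> = ln \<bar>u + v\<bar>\<close>.  It remains
  to show that the bounded function \<open>\<rho>\<close> converges.  Along any sequence on which \<open>\<rho> \<rightarrow> \<alpha>\<close>
  we get \<open>\<theta> \<rightarrow> \<Theta>(\<alpha>)\<close> with \<open>\<nabla>L(\<Theta>(\<alpha>)) = 0\<close>, and \<open>G \<rightarrow> K - \<alpha>\<close>.  For two limit points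
  \<open>\<alpha>, \<beta>\<close> the difference \<open>\<Theta>(\<alpha>) - \<Theta>(\<beta>)\<close> is orthogonal to all data points, hence to
  every value of \<open>G\<close>, so \<open>(\<alpha> - \<beta>) \<bullet> (\<Theta>(\<alpha>) - \<Theta>(\<beta>)) = 0\<close>; since \<open>\<Theta>\<close> is
  coordinatewise strictly increasing, \<open>\<alpha> = \<beta>\<close>.\<close>

section \<open>Analysis on the half-line\<close>

lemma lipschitz_on_bounded_vector_derivative:
  fixes f :: "real \<Rightarrow> 'a::real_normed_vector"
  assumes "convex S" "0 \<le> B"
    and "\<And>t. t \<in> S \<Longrightarrow> (f has_vector_derivative f' t) (at t within S)"
    and "\<And>t. t \<in> S \<Longrightarrow> norm (f' t) \<le> B"
  shows "B-lipschitz_on S f"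
  using assms
  by (intro bounded_derivative_imp_lipschitz)
    (auto simp: has_vector_derivative_def onorm_scaleR_left[OF bounded_linear_ident] onorm_id)

lemma uniformly_continuous_on_bounded_vector_derivative:
  fixes f :: "real \<Rightarrow> 'a::real_normed_vector"
  assumes "convex S" "bounded (f' ` S)"
    and "\<And>t. t \<in> S \<Longrightarrow> (f has_vector_derivative f' t) (at t within S)"
  shows "uniformly_continuous_on S f"
proof -
  obtain B where "B > 0" "\<And>t. t \<in> S \<Longrightarrow> norm (f' t) \<le> B"
    using assms(2) by (auto simp: bounded_pos)
  then have "B-lipschitz_on S f"
    using assms by (intro lipschitz_on_bounded_vector_derivative) auto
  then show ?thesis
    by (rule lipschitz_on_uniformly_continuous)
qed

lemma uniformly_continuous_on_cong:
  fixes f g :: "'a::metric_space \<Rightarrow> 'b::metric_space"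
  shows "uniformly_continuous_on S f \<Longrightarrow> (\<And>x. x \<in> S \<Longrightarrow> f x = g x) \<Longrightarrow> uniformly_continuous_on S g"
  unfolding uniformly_continuous_on_def by simp

lemma uniformly_continuous_on_compose_continuous:
  fixes f :: "'a::metric_space \<Rightarrow> 'b::heine_borel" and h :: "'b \<Rightarrow> 'c::metric_space"
  assumes "continuous_on UNIV h" "uniformly_continuous_on S f" "bounded (f ` S)"
  shows "uniformly_continuous_on S (\<lambda>x. h (f x))"
proof (rule uniformly_continuous_on_compose[OF assms(2)])
  have "continuous_on (closure (f ` S)) h"
    using assms(1) by (rule continuous_on_subset) simp
  moreover have "compact (closure (f ` S))"
    using assms(3) by simp
  ultimately have uc: "uniformly_continuous_on (closure (f ` S)) h"
    by (rule compact_uniformly_continuous)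
  show "uniformly_continuous_on (f ` S) h"
    unfolding uniformly_continuous_on_def
  proof (intro allI impI)
    fix e :: real
    assume "e > 0"
    with uc obtain d where "d > 0" and d: "\<And>a b. a \<in> closure (f ` S) \<Longrightarrow> b \<in> closure (f ` S) \<Longrightarrow>
        dist b a < d \<Longrightarrow> dist (h b) (h a) < e"
      unfolding uniformly_continuous_on_def by metis
    then show "\<exists>d>0. \<forall>x\<in>f ` S. \<forall>x'\<in>f ` S. dist x' x < d \<longrightarrow> dist (h x') (h x) < e"
      using closure_subset[of "f ` S"] by blast
  qed
qed

lemma bounded_image_compose_continuous:
  fixes f :: "'a \<Rightarrow> 'b::heine_borel" and h :: "'b \<Rightarrow> 'c::metric_space"
  assumes "continuous_on UNIV h" "bounded (f ` S)"
  shows "bounded ((\<lambda>x. h (f x)) ` S)"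
proof -
  have "continuous_on (closure (f ` S)) h"
    using assms(1) by (rule continuous_on_subset) simp
  moreover have "compact (closure (f ` S))"
    using assms(2) by simp
  ultimately have "bounded (h ` closure (f ` S))"
    by (intro compact_imp_bounded compact_continuous_image)
  moreover have "(\<lambda>x. h (f x)) ` S \<subseteq> h ` closure (f ` S)"
    using closure_subset by fastforce
  ultimately show ?thesis
    by (rule bounded_subset)
qed

lemma (in bounded_bilinear) bounded_image:
  assumes "bounded (f ` S)" "bounded (g ` S)"
  shows "bounded ((\<lambda>x. prod (f x) (g x)) ` S)"
proof -
  obtain A where A: "\<And>x. x \<in> S \<Longrightarrow> norm (f x) \<le> A"
    using assms(1) unfolding bounded_iff by auto
  obtain B where B: "\<And>x. x \<in> S \<Longrightarrow> norm (g x) \<le> B"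
    using assms(2) unfolding bounded_iff by auto
  obtain K where K: "\<And>a b. norm (prod a b) \<le> norm a * norm b * K" "K \<ge> 0"
    using nonneg_bounded by blast
  have "norm (prod (f x) (g x)) \<le> A * B * K" if "x \<in> S" for x
  proof -
    have "norm (f x) * norm (g x) \<le> A * B"
      using that A B by (intro mult_mono) (auto intro: order_trans[OF norm_ge_zero])
    then show ?thesis
      using K(1)[of "f x" "g x"] K(2) by (meson mult_right_mono order_trans)
  qed
  then show ?thesis
    unfolding bounded_iff by blast
qed

lemma (in bounded_bilinear) uniformly_continuous_on:
  fixes f :: "'d::metric_space \<Rightarrow> 'a" and g :: "'d \<Rightarrow> 'b"
  assumes "uniformly_continuous_on S f" "uniformly_continuous_on S g"
    and "bounded (f ` S)" "bounded (g ` S)"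
  shows "uniformly_continuous_on S (\<lambda>x. prod (f x) (g x))"
  unfolding uniformly_continuous_on_sequentially
proof (intro allI impI, elim conjE)
  fix a b :: "nat \<Rightarrow> 'd"
  assume ab: "\<forall>n. a n \<in> S" "\<forall>n. b n \<in> S" "(\<lambda>n. dist (a n) (b n)) \<longlonglongrightarrow> 0"
  have Z: "Zfun (\<lambda>n. h (a n) - h (b n)) sequentially"
    if "uniformly_continuous_on S h" for h :: "'d \<Rightarrow> 'e::real_normed_vector"
  proof -
    have "(\<lambda>n. norm (h (a n) - h (b n))) \<longlonglongrightarrow> 0"
      using that[unfolded uniformly_continuous_on_sequentially, rule_format, of a b] ab
      by (simp add: dist_norm)
    then have "(\<lambda>n. h (a n) - h (b n)) \<longlonglongrightarrow> 0"
      by (rule tendsto_norm_zero_cancel)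
    then show ?thesis
      by (simp add: tendsto_Zfun_iff)
  qed
  have B: "Bfun (\<lambda>n. h (c n)) sequentially"
    if bdd: "bounded (h ` S)" and c: "\<forall>n. c n \<in> S" for h :: "'d \<Rightarrow> 'e::real_normed_vector" and c
  proof -
    obtain K where "\<And>x. x \<in> S \<Longrightarrow> norm (h x) \<le> K"
      using bdd unfolding bounded_iff by auto
    then show ?thesis
      using c by (intro BfunI always_eventually) auto
  qed
  have "Zfun (\<lambda>n. prod (f (a n)) (g (a n) - g (b n)) + prod (f (a n) - f (b n)) (g (b n))) sequentially"
    using Bfun_prod_Zfun[OF B[OF assms(3) ab(1)] Z[OF assms(2)]]
      Zfun_prod_Bfun[OF Z[OF assms(1)] B[OF assms(4) ab(2)]]
    by (rule Zfun_add)
  moreover have "prod (f (a n)) (g (a n) - g (b n)) + prod (f (a n) - f (b n)) (g (b n))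
      = prod (f (a n)) (g (a n)) - prod (f (b n)) (g (b n))" for n
    by (simp add: diff_left diff_right)
  ultimately have "(\<lambda>n. prod (f (a n)) (g (a n)) - prod (f (b n)) (g (b n))) \<longlonglongrightarrow> 0"
    by (simp add: tendsto_Zfun_iff)
  then show "(\<lambda>n. dist (prod (f (a n)) (g (a n))) (prod (f (b n)) (g (b n)))) \<longlonglongrightarrow> 0"
    unfolding dist_norm by (rule tendsto_norm_zero)
qed

lemma norm_increment_sub_derivative_le:
  fixes F f :: "real \<Rightarrow> 'a::real_normed_vector"
  assumes "h \<ge> 0" "B \<ge> 0"
    and "\<And>s. s \<in> {t..t + h} \<Longrightarrow> (F has_vector_derivative f s) (at s within {t..t + h})"
    and "\<And>s. s \<in> {t..t + h} \<Longrightarrow> norm (f s - f t) \<le> B"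
  shows "norm (F (t + h) - F t - h *\<^sub>R f t) \<le> B * h"
proof -
  have "B-lipschitz_on {t..t + h} (\<lambda>s. F s - s *\<^sub>R f t)"
    using assms by (intro lipschitz_on_bounded_vector_derivative) (auto intro!: derivative_eq_intros)
  then have "dist (F (t + h) - (t + h) *\<^sub>R f t) (F t - t *\<^sub>R f t) \<le> B * dist (t + h) t"
    using assms(1) by (intro lipschitz_onD) auto
  then show ?thesis
    using assms(1) by (simp add: dist_norm algebra_simps)
qed

lemma Barbalat:
  fixes F f :: "real \<Rightarrow> 'a::real_normed_vector"
  assumes deriv: "\<And>t. t \<ge> T \<Longrightarrow> (F has_vector_derivative f t) (at t within {T..})"
    and lim: "(F \<longlongrightarrow> l) at_top"
    and uc: "uniformly_continuous_on {T..} f"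
  shows "(f \<longlongrightarrow> 0) at_top"
proof (rule tendstoI)
  fix e :: real
  assume "e > 0"
  then obtain d where d: "d > 0" "\<And>s t. s \<ge> T \<Longrightarrow> t \<ge> T \<Longrightarrow> dist s t < d \<Longrightarrow> dist (f s) (f t) < e / 2"
    using uc unfolding uniformly_continuous_on_def by (metis atLeast_iff half_gt_zero)
  define h where "h = d / 2"
  have h: "h > 0"
    using d(1) by (simp add: h_def)
  have close: "dist (f s) (f t) < e / 2" if "s \<ge> T" "t \<ge> T" "dist s t \<le> h" for s t
    using d h_def that by simp
  have "eventually (\<lambda>t. dist (F t) l < e * h / 4) at_top"
    using lim h \<open>e > 0\<close> by (intro tendstoD) auto
  then obtain N where N: "\<And>t. t \<ge> N \<Longrightarrow> norm (F t - l) < e * h / 4"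
    by (auto simp: eventually_at_top_linorder dist_norm)
  show "eventually (\<lambda>t. dist (f t) 0 < e) at_top"
    unfolding eventually_at_top_linorder
  proof (intro exI[of _ "max N T"] allI impI)
    fix t
    assume t: "t \<ge> max N T"
    have "norm (F (t + h) - F t - h *\<^sub>R f t) \<le> e / 2 * h"
    proof (rule norm_increment_sub_derivative_le)
      show "(F has_vector_derivative f s) (at s within {t..t + h})" if "s \<in> {t..t + h}" for s
        by (rule has_vector_derivative_within_subset[OF deriv]) (use that t in auto)
      show "norm (f s - f t) \<le> e / 2" if "s \<in> {t..t + h}" for s
        using close[of s t] that t by (auto simp: dist_norm dist_real_def)
    qed (use h \<open>e > 0\<close> in auto)
    then have "norm (F (t + h) - F t - h *\<^sub>R f t) \<le> e * h / 2"
      by simp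
    moreover have "norm (F (t + h) - F t) < e * h / 2"
      using N[of t] N[of "t + h"] t h norm_triangle_ineq4[of "F (t + h) - l" "F t - l"] by auto
    moreover have "norm (h *\<^sub>R f t) \<le> norm (F (t + h) - F t) + norm (F (t + h) - F t - h *\<^sub>R f t)"
      using norm_triangle_ineq4[of "F (t + h) - F t" "F (t + h) - F t - h *\<^sub>R f t"] by simp
    ultimately have "norm (h *\<^sub>R f t) < e * h"
      by linarith
    then have "h * norm (f t) < h * e"
      using h by (simp add: mult.commute)
    then show "dist (f t) 0 < e"
      using h by simp
  qed
qed

lemma DERIV_within_nonpos_imp_decreasing:
  fixes f :: "real \<Rightarrow> real"
  assumes "\<And>t. t \<ge> T \<Longrightarrow> (f has_real_derivative f' t) (at t within {T..})"
    and "\<And>t. t \<ge> T \<Longrightarrow> f' t \<le> 0" and "T \<le> s" "s \<le> t"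
  shows "f t \<le> f s"
proof -
  have "(f has_real_derivative f' r) (at r within {s..t})" if "s \<le> r" "r \<le> t" for r
    using assms(1)[of r] assms(3) that by (auto intro: has_field_derivative_subset)
  then obtain r where "r \<in> {s..t}" "f t - f s = f' r * (t - s)"
    using mvt_very_simple[of s t f "\<lambda>r d. f' r * d"] assms(4)
    by (auto simp: has_field_derivative_def)
  moreover have "f' r * (t - s) \<le> 0"
    using assms(2)[of r] assms(3,4) \<open>r \<in> {s..t}\<close> by (intro mult_nonpos_nonneg) auto
  ultimately show ?thesis
    by linarith
qed

lemma decreasing_bounded_below_converges:
  fixes f :: "real \<Rightarrow> real"
  assumes dec: "\<And>s t. T \<le> s \<Longrightarrow> s \<le> t \<Longrightarrow> f t \<le> f s"
    and bdd: "\<And>t. T \<le> t \<Longrightarrow> B \<le> f t"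
  shows "\<exists>l. (f \<longlongrightarrow> l) at_top"
proof -
  have "(f \<longlongrightarrow> Inf (f ` {T..})) at_top"
  proof (rule decreasing_tendsto)
    have "bdd_below (f ` {T..})"
      using bdd by (intro bdd_belowI2[where m = B]) auto
    then show "eventually (\<lambda>t. Inf (f ` {T..}) \<le> f t) at_top"
      unfolding eventually_at_top_linorder by (auto intro: cInf_lower)
    fix z
    assume "Inf (f ` {T..}) < z"
    then obtain s where "s \<ge> T" "f s < z"
      using cInf_lessD[of "f ` {T..}"] by force
    then show "eventually (\<lambda>t. f t < z) at_top"
      unfolding eventually_at_top_linorder using dec by (meson order_le_less_trans order_trans)
  qed
  then show ?thesis
    by blast
qed

lemma decreasing_converges_if_sum_bounded_below:
  fixes Q R :: "real \<Rightarrow> real"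
  assumes "\<And>s t. T \<le> s \<Longrightarrow> s \<le> t \<Longrightarrow> Q t \<le> Q s" "\<And>s t. T \<le> s \<Longrightarrow> s \<le> t \<Longrightarrow> R t \<le> R s"
    and "\<And>t. T \<le> t \<Longrightarrow> B \<le> Q t + R t"
  shows "\<exists>K. (Q \<longlongrightarrow> K) at_top"
proof (rule decreasing_bounded_below_converges)
  show "Q t \<le> Q s" if "T \<le> s" "s \<le> t" for s t
    using assms(1) that .
  show "B - R T \<le> Q t" if "T \<le> t" for t
    using assms(2)[of T t] assms(3)[of t] that by simp
qed

lemma tendsto_divide_0_if_bounded_below:
  fixes f f' :: "real \<Rightarrow> real"
  assumes "(f' \<longlongrightarrow> 0) at_top" "c > 0" "\<And>t. t \<ge> T \<Longrightarrow> c \<le> \<bar>f t\<bar>"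
  shows "((\<lambda>t. f' t / f t) \<longlongrightarrow> 0) at_top"
proof (rule Lim_null_comparison)
  show "eventually (\<lambda>t. norm (f' t / f t) \<le> \<bar>f' t\<bar> / c) at_top"
    using eventually_ge_at_top[of T]
  proof eventually_elim
    case (elim t)
    then have "c \<le> \<bar>f t\<bar>"
      by (rule assms(3))
    then show ?case
      using assms(2) by (auto intro!: divide_left_mono)
  qed
  show "((\<lambda>t. \<bar>f' t\<bar> / c) \<longlongrightarrow> 0) at_top"
    using tendsto_divide[OF tendsto_rabs[OF assms(1)] tendsto_const, of c] assms(2) by simp
qed

lemma bounded_at_top_convergent_subsequence:
  fixes f :: "real \<Rightarrow> 'a::heine_borel"
  assumes "bounded (f ` {T..})" "\<And>n. s n \<ge> T + real n"
  obtains r l where "strict_mono r" "(\<lambda>n. f (s (r n))) \<longlonglongrightarrow> l"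
    "filterlim (\<lambda>n. s (r n)) at_top sequentially"
proof -
  have "s n \<ge> T" for n
    using assms(2)[of n] by (smt (verit) of_nat_0_le_iff)
  then have "bounded (range (\<lambda>n. f (s n)))"
    by (intro bounded_subset[OF assms(1)]) auto
  then obtain r l where r: "strict_mono r" "((\<lambda>n. f (s n)) \<circ> r) \<longlonglongrightarrow> l"
    using bounded_imp_convergent_subsequence by blast
  have "filterlim (\<lambda>n. T + real n) at_top sequentially"
    by (rule filterlim_tendsto_add_at_top[OF tendsto_const filterlim_real_sequentially])
  then have "filterlim s at_top sequentially"
    by (rule filterlim_at_top_mono) (use assms(2) in simp)
  then have "filterlim (\<lambda>n. s (r n)) at_top sequentially"
    using filterlim_compose[OF _ filterlim_subseq[OF r(1)]] by blast
  with r that show ?thesis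
    by (auto simp: o_def)
qed

lemma tendsto_at_top_if_unique_sequential_limit:
  fixes f :: "real \<Rightarrow> 'a::heine_borel"
  assumes bdd: "bounded (f ` {T..})"
    and uniq: "\<And>s s' l l'. filterlim s at_top sequentially \<Longrightarrow> (\<lambda>n. f (s n)) \<longlonglongrightarrow> l \<Longrightarrow>
      filterlim s' at_top sequentially \<Longrightarrow> (\<lambda>n. f (s' n)) \<longlonglongrightarrow> l' \<Longrightarrow> l = l'"
  shows "\<exists>l. (f \<longlongrightarrow> l) at_top"
proof -
  obtain r l where r: "(\<lambda>n. f (T + real (r n))) \<longlonglongrightarrow> l"
    "filterlim (\<lambda>n. T + real (r n)) at_top sequentially"
    by (rule bounded_at_top_convergent_subsequence[OF bdd, of "\<lambda>n. T + real n"]) auto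
  have "(f \<longlongrightarrow> l) at_top"
  proof (rule ccontr)
    assume "\<not> (f \<longlongrightarrow> l) at_top"
    then obtain e where e: "e > 0" "\<not> eventually (\<lambda>t. dist (f t) l < e) at_top"
      unfolding tendsto_iff by blast
    then have "\<forall>n. \<exists>t. t \<ge> T + real n \<and> dist (f t) l \<ge> e"
      unfolding eventually_at_top_linorder by (meson not_le)
    then obtain s where "\<forall>n. s n \<ge> T + real n \<and> dist (f (s n)) l \<ge> e"
      by (rule choice[THEN exE])
    then have s: "\<And>n. s n \<ge> T + real n" "\<And>n. dist (f (s n)) l \<ge> e"
      by auto
    obtain r' l' where r': "(\<lambda>n. f (s (r' n))) \<longlonglongrightarrow> l'" "filterlim (\<lambda>n. s (r' n)) at_top sequentially"
      using bounded_at_top_convergent_subsequence[OF bdd s(1)] by metis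
    have "l = l'"
      by (rule uniq[OF r(2,1) r'(2,1)])
    moreover have "e \<le> dist l' l"
      using s(2) by (intro tendsto_lowerbound[OF tendsto_dist[OF r'(1) tendsto_const]]) auto
    ultimately show False
      using e(1) by simp
  qed
  then show ?thesis
    by blast
qed

lemma integral_has_vector_derivative_atLeast:
  fixes f :: "real \<Rightarrow> 'a::banach"
  assumes "continuous_on {a..} f" "t \<ge> a"
  shows "((\<lambda>t. integral {a..t} f) has_vector_derivative f t) (at t within {a..})"
proof -
  have "((\<lambda>t. integral {a..t} f) has_vector_derivative f t) (at t within {a..t + 1})"
    using assms by (intro integral_has_vector_derivative continuous_on_subset[OF assms(1)]) auto
  moreover have "at t within {a..t + 1} = at t within {a..}"
    using assms(2) by (intro at_within_nhd[where S = "{..<t + 1}"]) auto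
  ultimately show ?thesis
    by simp
qed

lemma integral_exp_weighted_over_exp_tendsto_0:
  fixes f :: "real \<Rightarrow> real"
  assumes lam: "lam > 0" and cont: "continuous_on {0..} f" and lim: "(f \<longlongrightarrow> 0) at_top"
  shows "((\<lambda>t. integral {0..t} (\<lambda>s. exp (s / lam) * f s) / exp (t / lam)) \<longlongrightarrow> 0) at_top"
proof (rule lhospital_at_top_at_top[where f' = "\<lambda>t. exp (t / lam) * f t" and g' = "\<lambda>t. exp (t / lam) / lam"])
  have "filterlim (\<lambda>t. (1 / lam) * t) at_top at_top"
    using lam by (intro filterlim_tendsto_pos_mult_at_top[OF tendsto_const _ filterlim_ident]) auto
  then show "filterlim (\<lambda>t. exp (t / lam)) at_top at_top"
    by (intro filterlim_compose[OF exp_at_top]) simp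
  show "eventually (\<lambda>t. exp (t / lam) / lam \<noteq> 0) at_top"
    using lam by simp
  show "eventually (\<lambda>t. ((\<lambda>t. exp (t / lam)) has_real_derivative exp (t / lam) / lam) (at t)) at_top"
    using lam by (auto intro!: derivative_eq_intros always_eventually)
  have cont': "continuous_on {0..} (\<lambda>s. exp (s / lam) * f s)"
    using lam by (intro continuous_intros cont) auto
  show "eventually (\<lambda>t. ((\<lambda>t. integral {0..t} (\<lambda>s. exp (s / lam) * f s)) has_real_derivative
      exp (t / lam) * f t) (at t)) at_top"
    using eventually_gt_at_top[of 0]
  proof eventually_elim
    case (elim t)
    then have "((\<lambda>t. integral {0..t} (\<lambda>s. exp (s / lam) * f s)) has_vector_derivative
        exp (t / lam) * f t) (at t within {0..})"
      by (intro integral_has_vector_derivative_atLeast[OF cont']) auto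
    moreover have "at t within {0..} = at t"
      using elim by (intro at_within_interior) auto
    ultimately show ?case
      by (simp add: has_real_derivative_iff_has_vector_derivative)
  qed
  have "((\<lambda>t. f t * lam) \<longlongrightarrow> 0 * lam) at_top"
    by (intro tendsto_intros lim)
  then show "((\<lambda>t. exp (t / lam) * f t / (exp (t / lam) / lam)) \<longlongrightarrow> 0) at_top"
    using lam by simp
qed

lemma exp_convolution_tendsto_0:
  fixes f :: "real \<Rightarrow> real"
  assumes "lam > 0" "continuous_on {0..} f" "(f \<longlongrightarrow> 0) at_top"
  shows "((\<lambda>t. integral {0..t} (\<lambda>s. exp (- (t - s) / lam) * f s)) \<longlongrightarrow> 0) at_top"
proof (rule Lim_transform_eventually[OF integral_exp_weighted_over_exp_tendsto_0[OF assms]])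
  have "exp (- (t - s) / lam) * f s = exp (s / lam) * f s / exp (t / lam)" for t s
    by (simp add: exp_diff diff_divide_distrib)
  then show "eventually (\<lambda>t. integral {0..t} (\<lambda>s. exp (s / lam) * f s) / exp (t / lam)
      = integral {0..t} (\<lambda>s. exp (- (t - s) / lam) * f s)) at_top"
    by simp
qed

section \<open>Coordinatewise products\<close>

lemma norm_vec_mult_le: "norm (a * b) \<le> norm a * norm (b :: real^'n)"
proof (rule power2_le_imp_le)
  have "(norm (a * b))\<^sup>2 = (\<Sum>i\<in>UNIV. (a $ i)\<^sup>2 * (b $ i)\<^sup>2)"
    unfolding power2_norm_eq_inner by (simp add: inner_vec_def power2_eq_square algebra_simps)
  also have "\<dots> \<le> (\<Sum>i\<in>UNIV. (a $ i)\<^sup>2 * (norm b)\<^sup>2)"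
    by (intro sum_mono mult_left_mono) (auto simp: abs_le_square_iff[symmetric] component_le_norm_cart)
  also have "\<dots> = (norm a * norm b)\<^sup>2"
    unfolding power_mult_distrib power2_norm_eq_inner
    by (simp add: inner_vec_def power2_eq_square sum_distrib_right)
  finally show "(norm (a * b))\<^sup>2 \<le> (norm a * norm b)\<^sup>2" .
qed simp

lemma bounded_bilinear_vec_mult: "bounded_bilinear ((*) :: real^'n \<Rightarrow> real^'n \<Rightarrow> real^'n)"
proof (rule bounded_bilinear.intro)
  show "\<exists>K. \<forall>a b :: real^'n. norm (a * b) \<le> norm a * norm b * K"
    by (intro exI[of _ 1] allI) (simp add: norm_vec_mult_le)
qed (simp_all add: vec_eq_iff algebra_simps)

lemma inner_vec_mult_left_commute: "a \<bullet> (b * c) = b \<bullet> (a * (c :: real^'n))"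
  by (simp add: inner_vec_def algebra_simps)

lemma has_real_derivative_vec_nth:
  "(f has_vector_derivative f') F \<Longrightarrow> ((\<lambda>t. f t $ k) has_real_derivative f' $ k) F"
  using bounded_linear.has_vector_derivative[OF bounded_linear_vec_nth]
  by (fastforce simp: has_real_derivative_iff_has_vector_derivative)

lemma coordinatewise_strict_mono_inner_eq_0_imp_eq:
  fixes a b :: "real^'n"
  assumes mono: "\<And>k. strict_mono (f k)"
    and "(a - b) \<bullet> ((\<chi> k. f k (a $ k)) - (\<chi> k. f k (b $ k))) = 0"
  shows "a = b"
proof -
  have pos: "0 < (a $ k - b $ k) * (f k (a $ k) - f k (b $ k))" if "a $ k \<noteq> b $ k" for k
    using that strict_monoD[OF mono, of "a $ k" "b $ k"] strict_monoD[OF mono, of "b $ k" "a $ k"]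
    by (cases "a $ k < b $ k") (auto intro: mult_pos_pos mult_neg_neg)
  have nonneg: "0 \<le> (a $ k - b $ k) * (f k (a $ k) - f k (b $ k))" for k
    using pos[of k] by (cases "a $ k = b $ k") auto
  have "(\<Sum>k\<in>UNIV. (a $ k - b $ k) * (f k (a $ k) - f k (b $ k))) = 0"
    using assms(2) by (simp add: inner_vec_def)
  then have zero: "(a $ k - b $ k) * (f k (a $ k) - f k (b $ k)) = 0" for k
    by (simp add: sum_nonneg_eq_0_iff nonneg)
  show ?thesis
    unfolding vec_eq_iff using pos zero by (metis less_irrefl)
qed

lemma exp_convolution_tendsto_0_cart:
  fixes f :: "real \<Rightarrow> real^'n"
  assumes lam: "lam > 0" and cont: "continuous_on {0..} f" and lim: "(f \<longlongrightarrow> 0) at_top"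
  shows "((\<lambda>t. integral {0..t} (\<lambda>s. exp (- (t - s) / lam) *\<^sub>R f s)) \<longlongrightarrow> 0) at_top"
proof (rule vec_tendstoI)
  fix k
  have "((\<lambda>t. integral {0..t} (\<lambda>s. exp (- (t - s) / lam) * f s $ k)) \<longlongrightarrow> 0) at_top"
    using lam continuous_on_component[OF cont] tendsto_vec_nth[OF lim]
    by (intro exp_convolution_tendsto_0) auto
  moreover have "integral {0..t} (\<lambda>s. exp (- (t - s) / lam) * f s $ k)
      = integral {0..t} (\<lambda>s. exp (- (t - s) / lam) *\<^sub>R f s) $ k" for t
  proof (cases "t \<ge> 0")
    case True
    have "continuous_on {0..t} (\<lambda>s. exp (- (t - s) / lam) *\<^sub>R f s)"
      using lam True by (intro continuous_intros continuous_on_subset[OF cont]) auto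
    then show ?thesis
      by (subst integral_component_eq_cart[symmetric]) (auto intro: integrable_continuous_interval)
  qed simp
  ultimately show "((\<lambda>t. integral {0..t} (\<lambda>s. exp (- (t - s) / lam) *\<^sub>R f s) $ k) \<longlongrightarrow> 0 $ k) at_top"
    by simp
qed

section \<open>A damped scalar oscillator\<close>

lemma ln_abs_eq_ln_square: "ln \<bar>r :: real\<bar> = ln (r\<^sup>2) / 2"
proof (cases "r = 0")
  case False
  then have "ln (r\<^sup>2) = 2 * ln \<bar>r\<bar>"
    using ln_realpow[of "\<bar>r\<bar>" 2] by simp
  then show ?thesis
    by simp
qed simp

lemma damped_Lyapunov_has_real_derivative:
  fixes G w w' :: "real \<Rightarrow> real"
  assumes dG: "(G has_real_derivative \<gamma>) (at t within S)"
    and dw: "(w has_real_derivative w' t) (at t within S)"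
    and dw': "(w' has_real_derivative w'') (at t within S)"
    and nz: "w t \<noteq> 0"
    and ode: "lam * w'' + w' t + \<gamma> * w t = 0"
  shows "((\<lambda>s. G s + lam * (w' s / w s) + ln \<bar>w s\<bar>) has_real_derivative - lam * (w' t / w t)\<^sup>2)
    (at t within S)"
proof -
  have "((\<lambda>s. ln ((w s)\<^sup>2)) has_real_derivative 2 * (w' t / w t)) (at t within S)"
    by (rule DERIV_cong[OF DERIV_chain2[OF DERIV_ln_divide DERIV_power[OF dw, of 2]]])
      (use nz in \<open>auto simp: power2_eq_square zero_less_mult_iff\<close>)
  then have "((\<lambda>s. G s + lam * (w' s / w s) + ln ((w s)\<^sup>2) / 2) has_real_derivative
      \<gamma> + lam * ((w'' * w t - w' t * w' t) / (w t * w t)) + 2 * (w' t / w t) / 2)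
      (at t within S)"
    by (intro DERIV_add DERIV_cmult DERIV_divide dG dw dw' nz DERIV_cdivide)
  moreover have "\<gamma> + lam * ((w'' * w t - w' t * w' t) / (w t * w t)) + 2 * (w' t / w t) / 2
      = - lam * (w' t / w t)\<^sup>2"
  proof -
    have "\<gamma> + lam * ((w'' * w t - w' t * w' t) / (w t * w t)) + 2 * (w' t / w t) / 2
        = (lam * w'' + w' t + \<gamma> * w t) / w t - lam * (w' t / w t)\<^sup>2"
      using nz by (simp add: field_simps power2_eq_square)
    then show ?thesis
      by (simp add: ode)
  qed
  ultimately show ?thesis
    by (simp add: ln_abs_eq_ln_square)
qed

lemma damped_Lyapunov_decreasing:
  fixes G w w' w'' :: "real \<Rightarrow> real"
  assumes "lam > 0"
    and "\<And>t. t \<ge> T \<Longrightarrow> (G has_real_derivative \<gamma> t) (at t within {T..})"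
    and "\<And>t. t \<ge> T \<Longrightarrow> (w has_real_derivative w' t) (at t within {T..})"
    and "\<And>t. t \<ge> T \<Longrightarrow> (w' has_real_derivative w'' t) (at t within {T..})"
    and "\<And>t. t \<ge> T \<Longrightarrow> w t \<noteq> 0"
    and "\<And>t. t \<ge> T \<Longrightarrow> lam * w'' t + w' t + \<gamma> t * w t = 0"
    and "T \<le> s" "s \<le> t"
  shows "G t + lam * (w' t / w t) + ln \<bar>w t\<bar> \<le> G s + lam * (w' s / w s) + ln \<bar>w s\<bar>"
proof (rule DERIV_within_nonpos_imp_decreasing[where f = "\<lambda>t. G t + lam * (w' t / w t) + ln \<bar>w t\<bar>"
      and f' = "\<lambda>t. - lam * (w' t / w t)\<^sup>2"])
  fix r
  assume "r \<ge> T"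
  with assms show "((\<lambda>t. G t + lam * (w' t / w t) + ln \<bar>w t\<bar>) has_real_derivative
      - lam * (w' r / w r)\<^sup>2) (at r within {T..})"
    by (intro damped_Lyapunov_has_real_derivative) auto
  show "- lam * (w' r / w r)\<^sup>2 \<le> 0"
    using \<open>lam > 0\<close> by simp
qed (use assms in auto)

text \<open>The Lyapunov functions \<open>G + \<lambda> w'/w + ln \<bar>w\<bar>\<close> of \<open>\<lambda> w'' + w' + G' w = 0\<close> and
  \<open>-G + \<lambda> z'/z + ln \<bar>z\<bar>\<close> of \<open>\<lambda> z'' + z' - G' z = 0\<close> both decrease, and once \<open>w'/w\<close> and \<open>z'/z\<close>
  are small their sum \<open>\<lambda> (w'/w + z'/z) + ln \<bar>w z\<bar>\<close> is bounded below; so both converge.\<close>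

lemma antiderivative_plus_ln_abs_converges:
  fixes G \<gamma> w w' w'' z z' z'' :: "real \<Rightarrow> real"
  assumes lam: "lam > 0" and c: "c > 0"
    and dG: "\<And>t. t \<ge> T \<Longrightarrow> (G has_real_derivative \<gamma> t) (at t within {T..})"
    and dw: "\<And>t. t \<ge> T \<Longrightarrow> (w has_real_derivative w' t) (at t within {T..})"
    and dw': "\<And>t. t \<ge> T \<Longrightarrow> (w' has_real_derivative w'' t) (at t within {T..})"
    and ode_w: "\<And>t. t \<ge> T \<Longrightarrow> lam * w'' t + w' t + \<gamma> t * w t = 0"
    and w_ge: "\<And>t. t \<ge> T \<Longrightarrow> c \<le> \<bar>w t\<bar>"
    and w'_lim: "(w' \<longlongrightarrow> 0) at_top"
    and dz: "\<And>t. t \<ge> T \<Longrightarrow> (z has_real_derivative z' t) (at t within {T..})"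
    and dz': "\<And>t. t \<ge> T \<Longrightarrow> (z' has_real_derivative z'' t) (at t within {T..})"
    and ode_z: "\<And>t. t \<ge> T \<Longrightarrow> lam * z'' t + z' t - \<gamma> t * z t = 0"
    and z_ge: "\<And>t. t \<ge> T \<Longrightarrow> c \<le> \<bar>z t\<bar>"
    and z'_lim: "(z' \<longlongrightarrow> 0) at_top"
  shows "\<exists>K. ((\<lambda>t. G t + ln \<bar>w t\<bar>) \<longlongrightarrow> K) at_top"
proof -
  define Q where "Q t = G t + lam * (w' t / w t) + ln \<bar>w t\<bar>" for t
  define R where "R t = - G t + lam * (z' t / z t) + ln \<bar>z t\<bar>" for t
  have nz: "w t \<noteq> 0" "z t \<noteq> 0" if "t \<ge> T" for t
    using w_ge[OF that] z_ge[OF that] c by auto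
  have Q_dec: "Q t \<le> Q s" if "T \<le> s" "s \<le> t" for s t
    unfolding Q_def by (rule damped_Lyapunov_decreasing) (fact lam dG dw dw' nz(1) ode_w that)+
  have R_dec: "R t \<le> R s" if "T \<le> s" "s \<le> t" for s t
    unfolding R_def
    by (rule damped_Lyapunov_decreasing[where G = "\<lambda>t. - G t" and \<gamma> = "\<lambda>t. - \<gamma> t"])
      (use lam dz dz' nz(2) ode_z that in \<open>auto intro: DERIV_minus dG\<close>)
  have "eventually (\<lambda>t. dist (w' t / w t) 0 < 1 \<and> dist (z' t / z t) 0 < 1 \<and> t \<ge> T) at_top"
    using tendsto_divide_0_if_bounded_below[OF w'_lim c w_ge]
      tendsto_divide_0_if_bounded_below[OF z'_lim c z_ge]
    by (intro eventually_conj eventually_ge_at_top tendstoD) auto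
  then obtain T1 where T1: "\<And>t. t \<ge> T1 \<Longrightarrow> \<bar>w' t / w t\<bar> < 1 \<and> \<bar>z' t / z t\<bar> < 1 \<and> t \<ge> T"
    by (auto simp: eventually_at_top_linorder dist_real_def)
  have "\<exists>K. (Q \<longlongrightarrow> K) at_top"
  proof (rule decreasing_converges_if_sum_bounded_below)
    show "Q t \<le> Q s" "R t \<le> R s" if "T1 \<le> s" "s \<le> t" for s t
      using Q_dec R_dec that T1[of s] by auto
    show "- 2 * lam + 2 * ln c \<le> Q t + R t" if "T1 \<le> t" for t
    proof -
      have "ln c \<le> ln \<bar>w t\<bar>" "ln c \<le> ln \<bar>z t\<bar>"
        using w_ge z_ge T1[OF that] c by (auto intro: ln_mono)
      moreover have "lam * (- 1) \<le> lam * (w' t / w t)" "lam * (- 1) \<le> lam * (z' t / z t)"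
        using T1[OF that] lam unfolding abs_less_iff by (intro mult_left_mono; simp)+
      ultimately show ?thesis
        unfolding Q_def R_def by simp
    qed
  qed
  then obtain K where "(Q \<longlongrightarrow> K) at_top"
    by blast
  then have "((\<lambda>t. Q t - lam * (w' t / w t)) \<longlongrightarrow> K - lam * 0) at_top"
    by (intro tendsto_intros tendsto_divide_0_if_bounded_below[OF w'_lim c w_ge])
  then have "((\<lambda>t. G t + ln \<bar>w t\<bar>) \<longlongrightarrow> K) at_top"
    unfolding Q_def by simp
  then show ?thesis
    by blast
qed

section \<open>The momentum flow\<close>

lemma continuous_on_gradL: "continuous_on S (gradL x y)"
  unfolding gradL_def by (intro continuous_intros)

lemma lossL_nonneg: "lossL x y \<theta> \<ge> 0"
  unfolding lossL_def by (intro mult_nonneg_nonneg sum_nonneg) auto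

lemma inner_gradL_eq_0:
  assumes "\<And>j. x j \<bullet> e = 0"
  shows "gradL x y \<theta> \<bullet> e = 0"
  using assms unfolding gradL_def by (simp add: inner_sum_left)

lemma gradL_eq_imp_orthogonal:
  fixes x :: "'n::finite \<Rightarrow> real^'d::finite"
  assumes "gradL x y a = gradL x y b"
  shows "x j \<bullet> (a - b) = 0"
proof -
  have "gradL x y a - gradL x y b = (1 / real CARD('n)) *\<^sub>R
      ((\<Sum>i\<in>UNIV. (y i - x i \<bullet> b) *\<^sub>R x i) - (\<Sum>i\<in>UNIV. (y i - x i \<bullet> a) *\<^sub>R x i))"
    unfolding gradL_def by (simp add: scaleR_diff_right)
  also have "(\<Sum>i\<in>UNIV. (y i - x i \<bullet> b) *\<^sub>R x i) - (\<Sum>i\<in>UNIV. (y i - x i \<bullet> a) *\<^sub>R x i)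
      = (\<Sum>i\<in>UNIV. (x i \<bullet> (a - b)) *\<^sub>R x i)"
    unfolding sum_subtractf[symmetric]
    by (rule sum.cong) (auto simp: scaleR_diff_left[symmetric] inner_diff_right)
  finally have "gradL x y a - gradL x y b = (1 / real CARD('n)) *\<^sub>R (\<Sum>i\<in>UNIV. (x i \<bullet> (a - b)) *\<^sub>R x i)" .
  then have "(\<Sum>i\<in>UNIV. (x i \<bullet> (a - b)) *\<^sub>R x i) = 0"
    using assms by simp
  then have "(\<Sum>i\<in>UNIV. (x i \<bullet> (a - b)) *\<^sub>R x i) \<bullet> (a - b) = 0"
    by (simp only: inner_zero_left)
  then have "(\<Sum>i\<in>UNIV. (x i \<bullet> (a - b))\<^sup>2) = 0"
    by (simp only: inner_sum_left inner_scaleR_left power2_eq_square)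
  then show ?thesis
    by (simp add: sum_nonneg_eq_0_iff)
qed

text \<open>With \<open>w = u + v\<close> and \<open>z = u - v\<close> one has \<open>\<theta> = u v = (w\<^sup>2 - z\<^sup>2) / 4\<close> and
  \<open>\<Delta> = \<bar>w z\<bar>\<close>, so \<open>\<theta> = theta_of \<Delta> \<rho>\<close> for \<open>\<rho> = ln \<bar>w\<bar>\<close>.\<close>

definition theta_of :: "real^'d \<Rightarrow> real^'d \<Rightarrow> real^'d" where
  "theta_of D r = (\<chi> k. (exp (2 * r $ k) - (D $ k)\<^sup>2 * exp (- 2 * r $ k)) / 4)"

lemma strict_mono_theta_of_component: "strict_mono (\<lambda>r. (exp (2 * r) - (c :: real)\<^sup>2 * exp (- 2 * r)) / 4)"
proof (rule strict_monoI)
  fix a b :: real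
  assume "a < b"
  then have "exp (2 * a) < exp (2 * b)" "c\<^sup>2 * exp (- 2 * b) \<le> c\<^sup>2 * exp (- 2 * a)"
    by (auto intro: mult_left_mono)
  then have "exp (2 * a) - c\<^sup>2 * exp (- 2 * a) < exp (2 * b) - c\<^sup>2 * exp (- 2 * b)"
    by (rule less_le_trans[OF diff_strict_right_mono diff_left_mono])
  then show "(exp (2 * a) - c\<^sup>2 * exp (- 2 * a)) / 4 < (exp (2 * b) - c\<^sup>2 * exp (- 2 * b)) / 4"
    by simp
qed

lemma theta_of_inner_eq_0_imp_eq:
  assumes "(a - b) \<bullet> (theta_of D a - theta_of D b) = 0"
  shows "a = b"
  using assms unfolding theta_of_def
  by (rule coordinatewise_strict_mono_inner_eq_0_imp_eq[OF strict_mono_theta_of_component])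

locale momentum_flow =
  fixes x :: "'n::finite \<Rightarrow> real^'d::finite" and y :: "'n \<Rightarrow> real"
    and lam :: real
    and u v u' v' u'' v'' :: "real \<Rightarrow> real^'d"
  assumes lam_pos: "lam > 0"
    and du: "\<And>t. t \<ge> 0 \<Longrightarrow> (u has_vector_derivative u' t) (at t within {0..})"
    and dv: "\<And>t. t \<ge> 0 \<Longrightarrow> (v has_vector_derivative v' t) (at t within {0..})"
    and ddu: "\<And>t. t \<ge> 0 \<Longrightarrow> (u' has_vector_derivative u'' t) (at t within {0..})"
    and ddv: "\<And>t. t \<ge> 0 \<Longrightarrow> (v' has_vector_derivative v'' t) (at t within {0..})"
    and ode_u: "\<And>t. t \<ge> 0 \<Longrightarrow> lam *\<^sub>R u'' t + u' t + gradL x y (u t * v t) * v t = 0"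
    and ode_v: "\<And>t. t \<ge> 0 \<Longrightarrow> lam *\<^sub>R v'' t + v' t + gradL x y (u t * v t) * u t = 0"
    and bdd_u: "bounded (u ` {0..})"
    and bdd_v: "bounded (v ` {0..})"
begin

definition theta :: "real \<Rightarrow> real^'d" where
  "theta t = u t * v t"

definition grad :: "real \<Rightarrow> real^'d" where
  "grad t = gradL x y (theta t)"

definition kinetic :: "real \<Rightarrow> real" where
  "kinetic t = u' t \<bullet> u' t + v' t \<bullet> v' t"

definition energy :: "real \<Rightarrow> real" where
  "energy t = lossL x y (theta t) + lam / 2 * kinetic t"

definition Delta :: "real \<Rightarrow> real^'d" where
  "Delta t = (\<chi> k. \<bar>(u t $ k)\<^sup>2 - (v t $ k)\<^sup>2\<bar>)"

definition G :: "real \<Rightarrow> real^'d" where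
  "G t = integral {0..t} grad"

definition rho :: "real \<Rightarrow> real^'d" where
  "rho t = (\<chi> k. ln \<bar>u t $ k + v t $ k\<bar>)"

lemma lam_u'': "t \<ge> 0 \<Longrightarrow> lam *\<^sub>R u'' t = - (u' t + grad t * v t)"
  using ode_u by (simp only: grad_def theta_def eq_neg_iff_add_eq_0 add.assoc)

lemma lam_v'': "t \<ge> 0 \<Longrightarrow> lam *\<^sub>R v'' t = - (v' t + grad t * u t)"
  using ode_v by (simp only: grad_def theta_def eq_neg_iff_add_eq_0 add.assoc)

lemma u''_eq: "t \<ge> 0 \<Longrightarrow> u'' t = - (1 / lam) *\<^sub>R (u' t + grad t * v t)"
  using arg_cong[OF lam_u'', of t "scaleR (1 / lam)"] lam_pos
  by (simp add: scaleR_right_distrib scaleR_right_diff_distrib)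

lemma v''_eq: "t \<ge> 0 \<Longrightarrow> v'' t = - (1 / lam) *\<^sub>R (v' t + grad t * u t)"
  using arg_cong[OF lam_v'', of t "scaleR (1 / lam)"] lam_pos
  by (simp add: scaleR_right_distrib scaleR_right_diff_distrib)

lemma theta_has_vector_derivative:
  "t \<ge> 0 \<Longrightarrow> (theta has_vector_derivative u' t * v t + u t * v' t) (at t within {0..})"
  unfolding theta_def
  using bounded_bilinear.has_vector_derivative[OF bounded_bilinear_vec_mult du dv]
  by (simp add: add.commute)

lemma energy_has_real_derivative:
  assumes t: "t \<ge> 0"
  shows "(energy has_real_derivative - kinetic t) (at t within {0..})"
proof -
  have loss': "((\<lambda>s. lossL x y (theta s)) has_derivative (\<lambda>h. (h *\<^sub>R (u' t * v t + u t * v' t)) \<bullet> grad t))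
      (at t within {0..})"
    using has_derivative_compose[OF theta_has_vector_derivative[OF t, unfolded has_vector_derivative_def]
        gradL_is_gradient[unfolded gderiv_def]]
    by (simp add: grad_def)
  have loss: "((\<lambda>s. lossL x y (theta s)) has_real_derivative grad t \<bullet> (u' t * v t + u t * v' t))
      (at t within {0..})"
    unfolding has_field_derivative_def
    by (rule has_derivative_eq_rhs[OF loss']) (simp add: fun_eq_iff inner_commute)
  have kin: "(kinetic has_real_derivative 2 * (u' t \<bullet> u'' t + v' t \<bullet> v'' t)) (at t within {0..})"
    using bounded_bilinear.has_vector_derivative[OF bounded_bilinear_inner ddu[OF t] ddu[OF t]]
      bounded_bilinear.has_vector_derivative[OF bounded_bilinear_inner ddv[OF t] ddv[OF t]]
    unfolding kinetic_def has_real_derivative_iff_has_vector_derivative[symmetric]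
    by (auto intro!: derivative_eq_intros simp: inner_commute)
  have "grad t \<bullet> (u' t * v t + u t * v' t) + lam / 2 * (2 * (u' t \<bullet> u'' t + v' t \<bullet> v'' t))
      = grad t \<bullet> (u' t * v t) + grad t \<bullet> (u t * v' t) + u' t \<bullet> (lam *\<^sub>R u'' t) + v' t \<bullet> (lam *\<^sub>R v'' t)"
    by (simp add: algebra_simps)
  also have "\<dots> = - kinetic t"
  proof -
    have "grad t \<bullet> (u' t * v t) = u' t \<bullet> (grad t * v t)"
      by (rule inner_vec_mult_left_commute)
    moreover have "grad t \<bullet> (u t * v' t) = v' t \<bullet> (grad t * u t)"
      by (simp add: mult.commute[of "u t"] inner_vec_mult_left_commute)
    ultimately show ?thesis
      by (simp add: lam_u''[OF t] lam_v''[OF t] kinetic_def inner_diff_right)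
  qed
  finally show ?thesis
    using DERIV_add[OF loss DERIV_cmult[OF kin, of "lam / 2"]] unfolding energy_def by simp
qed

lemma kinetic_nonneg: "kinetic t \<ge> 0"
  unfolding kinetic_def by simp

lemma energy_decreasing: "0 \<le> s \<Longrightarrow> s \<le> t \<Longrightarrow> energy t \<le> energy s"
  using energy_has_real_derivative kinetic_nonneg
  by (intro DERIV_within_nonpos_imp_decreasing[of 0 energy "\<lambda>t. - kinetic t"]) auto

lemma energy_nonneg: "energy t \<ge> 0"
  unfolding energy_def using lossL_nonneg[of x y "theta t"] kinetic_nonneg[of t] lam_pos by simp

lemma energy_converges: "\<exists>l. (energy \<longlongrightarrow> l) at_top"
  using energy_decreasing energy_nonneg by (intro decreasing_bounded_below_converges[of 0]) auto

lemma kinetic_bounded: "t \<ge> 0 \<Longrightarrow> kinetic t \<le> 2 / lam * energy 0"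
  using energy_decreasing[of 0 t] lossL_nonneg[of x y "theta t"] lam_pos
  by (simp add: energy_def field_simps)

lemma bounded_u': "bounded (u' ` {0..})" and bounded_v': "bounded (v' ` {0..})"
proof -
  have "norm (u' t) \<le> sqrt (2 / lam * energy 0) \<and> norm (v' t) \<le> sqrt (2 / lam * energy 0)" if "t \<ge> 0" for t
    using kinetic_bounded[OF that] kinetic_nonneg[of t]
    unfolding kinetic_def power2_norm_eq_inner[symmetric]
    by (intro conjI real_le_rsqrt) (auto intro: order_trans[rotated])
  then show "bounded (u' ` {0..})" "bounded (v' ` {0..})"
    unfolding bounded_iff by auto
qed

lemma bounded_theta: "bounded (theta ` {0..})"
  unfolding theta_def by (rule bounded_bilinear.bounded_image[OF bounded_bilinear_vec_mult bdd_u bdd_v])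

lemma bounded_grad: "bounded (grad ` {0..})"
  unfolding grad_def by (rule bounded_image_compose_continuous[OF continuous_on_gradL bounded_theta])

lemma bounded_u'': "bounded (u'' ` {0..})"
proof -
  have "bounded ((\<lambda>t. - (1 / lam) *\<^sub>R (u' t + grad t * v t)) ` {0..})"
    using bounded_scaling[OF bounded_plus_comp[OF bounded_u'
          bounded_bilinear.bounded_image[OF bounded_bilinear_vec_mult bounded_grad bdd_v]], of "- (1 / lam)"]
    by (simp add: image_image)
  then show ?thesis
    by (rule bounded_subset) (auto simp: u''_eq)
qed

lemma bounded_v'': "bounded (v'' ` {0..})"
proof -
  have "bounded ((\<lambda>t. - (1 / lam) *\<^sub>R (v' t + grad t * u t)) ` {0..})"
    using bounded_scaling[OF bounded_plus_comp[OF bounded_v'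
          bounded_bilinear.bounded_image[OF bounded_bilinear_vec_mult bounded_grad bdd_u]], of "- (1 / lam)"]
    by (simp add: image_image)
  then show ?thesis
    by (rule bounded_subset) (auto simp: v''_eq)
qed

lemma uniformly_continuous_u: "uniformly_continuous_on {0..} u"
  and uniformly_continuous_v: "uniformly_continuous_on {0..} v"
  and uniformly_continuous_u': "uniformly_continuous_on {0..} u'"
  and uniformly_continuous_v': "uniformly_continuous_on {0..} v'"
  using uniformly_continuous_on_bounded_vector_derivative[OF convex_real_interval(1), of _ 0]
    du dv ddu ddv bounded_u' bounded_v' bounded_u'' bounded_v''
  by (metis atLeast_iff)+

lemma uniformly_continuous_grad: "uniformly_continuous_on {0..} grad"
proof -
  have "uniformly_continuous_on {0..} theta"
    unfolding theta_def
    by (rule bounded_bilinear.uniformly_continuous_on[OF bounded_bilinear_vec_mult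
          uniformly_continuous_u uniformly_continuous_v bdd_u bdd_v])
  then show ?thesis
    unfolding grad_def
    by (rule uniformly_continuous_on_compose_continuous[OF continuous_on_gradL _ bounded_theta])
qed

lemma uniformly_continuous_u'': "uniformly_continuous_on {0..} u''"
  and uniformly_continuous_v'': "uniformly_continuous_on {0..} v''"
proof -
  have "uniformly_continuous_on {0..} (\<lambda>t. grad t * v t)"
    by (rule bounded_bilinear.uniformly_continuous_on[OF bounded_bilinear_vec_mult
          uniformly_continuous_grad uniformly_continuous_v bounded_grad bdd_v])
  moreover have "uniformly_continuous_on {0..} (\<lambda>t. grad t * u t)"
    by (rule bounded_bilinear.uniformly_continuous_on[OF bounded_bilinear_vec_mult
          uniformly_continuous_grad uniformly_continuous_u bounded_grad bdd_u])
  ultimately have uc_u'': "uniformly_continuous_on {0..} (\<lambda>t. - (1 / lam) *\<^sub>R (u' t + grad t * v t))"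
    and uc_v'': "uniformly_continuous_on {0..} (\<lambda>t. - (1 / lam) *\<^sub>R (v' t + grad t * u t))"
    by (auto intro!: uniformly_continuous_on_minus uniformly_continuous_on_cmul uniformly_continuous_on_add
        uniformly_continuous_u' uniformly_continuous_v')
  show "uniformly_continuous_on {0..} u''"
    by (rule uniformly_continuous_on_cong[OF uc_u'']) (simp add: u''_eq)
  show "uniformly_continuous_on {0..} v''"
    by (rule uniformly_continuous_on_cong[OF uc_v'']) (simp add: v''_eq)
qed

lemma kinetic_tendsto_0: "(kinetic \<longlongrightarrow> 0) at_top"
proof -
  obtain l where "(energy \<longlongrightarrow> l) at_top"
    using energy_converges by blast
  moreover have "uniformly_continuous_on {0..} (\<lambda>t. - kinetic t)"
    unfolding kinetic_def
    by (intro uniformly_continuous_on_minus uniformly_continuous_on_add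
        bounded_bilinear.uniformly_continuous_on[OF bounded_bilinear_inner]
        uniformly_continuous_u' uniformly_continuous_v' bounded_u' bounded_v')
  ultimately have "((\<lambda>t. - kinetic t) \<longlongrightarrow> 0) at_top"
    using energy_has_real_derivative
    by (intro Barbalat[where F = energy]) (auto simp: has_real_derivative_iff_has_vector_derivative)
  then show ?thesis
    using tendsto_minus by fastforce
qed

lemma u'_tendsto_0: "(u' \<longlongrightarrow> 0) at_top" and v'_tendsto_0: "(v' \<longlongrightarrow> 0) at_top"
proof -
  have sqrt_lim: "((\<lambda>t. sqrt (kinetic t)) \<longlongrightarrow> 0) at_top"
    using tendsto_real_sqrt[OF kinetic_tendsto_0] by simp
  have "norm (u' t) \<le> sqrt (kinetic t)" "norm (v' t) \<le> sqrt (kinetic t)" for t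
    unfolding kinetic_def by (auto intro!: real_le_rsqrt simp: power2_norm_eq_inner)
  then show "(u' \<longlongrightarrow> 0) at_top" "(v' \<longlongrightarrow> 0) at_top"
    by (auto intro!: Lim_null_comparison[OF _ sqrt_lim] always_eventually)
qed

lemma u''_tendsto_0: "(u'' \<longlongrightarrow> 0) at_top" and v''_tendsto_0: "(v'' \<longlongrightarrow> 0) at_top"
  using ddu ddv by (auto intro!: Barbalat u'_tendsto_0 v'_tendsto_0
      uniformly_continuous_u'' uniformly_continuous_v'')

lemma grad_mult_v_tendsto_0: "((\<lambda>t. grad t * v t) \<longlongrightarrow> 0) at_top"
proof (rule Lim_transform_eventually)
  show "((\<lambda>t. - (lam *\<^sub>R u'' t) - u' t) \<longlongrightarrow> 0) at_top"
    using tendsto_diff[OF tendsto_minus[OF tendsto_scaleR[OF tendsto_const u''_tendsto_0]] u'_tendsto_0]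
    by simp
  show "eventually (\<lambda>t. - (lam *\<^sub>R u'' t) - u' t = grad t * v t) at_top"
    using eventually_ge_at_top[of 0] by eventually_elim (simp add: lam_u'')
qed

lemma grad_mult_u_tendsto_0: "((\<lambda>t. grad t * u t) \<longlongrightarrow> 0) at_top"
proof (rule Lim_transform_eventually)
  show "((\<lambda>t. - (lam *\<^sub>R v'' t) - v' t) \<longlongrightarrow> 0) at_top"
    using tendsto_diff[OF tendsto_minus[OF tendsto_scaleR[OF tendsto_const v''_tendsto_0]] v'_tendsto_0]
    by simp
  show "eventually (\<lambda>t. - (lam *\<^sub>R v'' t) - v' t = grad t * u t) at_top"
    using eventually_ge_at_top[of 0] by eventually_elim (simp add: lam_v'')
qed

lemma continuous_on_grad: "continuous_on {0..} grad"
  using uniformly_continuous_grad by (rule uniformly_continuous_imp_continuous)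

lemma G_has_vector_derivative: "t \<ge> 0 \<Longrightarrow> (G has_vector_derivative grad t) (at t within {0..})"
  unfolding G_def by (rule integral_has_vector_derivative_atLeast[OF continuous_on_grad])

lemma inner_G_eq_0:
  assumes "\<And>j. x j \<bullet> e = 0" "t \<ge> 0"
  shows "G t \<bullet> e = 0"
proof -
  have "G t \<bullet> e = integral {0..t} (\<lambda>s. grad s \<bullet> e)"
    unfolding G_def
    using integral_linear[OF integrable_continuous_interval bounded_linear_inner_left, of 0 t grad e]
      continuous_on_subset[OF continuous_on_grad, of "{0..t}"] assms(2)
    by (simp add: o_def)
  also have "\<dots> = 0"
    using assms(1) by (simp add: grad_def inner_gradL_eq_0)
  finally show ?thesis .
qed

lemma theta_eq_theta_of:
  assumes "\<And>k. u t $ k + v t $ k \<noteq> 0"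
  shows "theta t = theta_of (Delta t) (rho t)"
  unfolding vec_eq_iff
proof
  fix k
  define w where "w = u t $ k + v t $ k"
  have "w \<noteq> 0"
    using assms unfolding w_def by blast
  moreover have "rho t $ k = ln \<bar>w\<bar>"
    unfolding rho_def w_def by simp
  ultimately have "exp (2 * rho t $ k) = w\<^sup>2" "exp (- 2 * rho t $ k) = 1 / w\<^sup>2"
    by (simp_all add: exp_double exp_minus inverse_eq_divide)
  moreover have "theta t $ k = (w\<^sup>2 - (u t $ k - v t $ k)\<^sup>2) / 4"
    "(Delta t $ k)\<^sup>2 = w\<^sup>2 * (u t $ k - v t $ k)\<^sup>2"
    unfolding theta_def Delta_def w_def by (simp_all add: power2_eq_square algebra_simps)
  ultimately show "theta t $ k = theta_of (Delta t) (rho t) $ k"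
    using \<open>w \<noteq> 0\<close> by (simp add: theta_of_def)
qed

end

section \<open>Convergence of the integrated gradient\<close>

lemma abs_mult_gt_imp_factors_gt:
  fixes a b e M :: real
  assumes "e < \<bar>a * b\<bar>" "\<bar>a\<bar> \<le> M" "\<bar>b\<bar> \<le> M" "M > 0"
  shows "e / M < \<bar>a\<bar> \<and> e / M < \<bar>b\<bar>"
proof -
  have "\<bar>a\<bar> * \<bar>b\<bar> \<le> \<bar>a\<bar> * M" "\<bar>a\<bar> * \<bar>b\<bar> \<le> M * \<bar>b\<bar>"
    using assms(2,3) by (simp_all add: mult_left_mono mult_right_mono)
  then show ?thesis
    using assms(1,4) by (auto simp: divide_less_eq abs_mult mult.commute)
qed

locale momentum_flow_nondegenerate = momentum_flow +
  fixes Dinf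
  assumes Delta_lim: "((\<lambda>t. \<chi> i. \<bar>(u t $ i)\<^sup>2 - (v t $ i)\<^sup>2\<bar>) \<longlongrightarrow> Dinf) at_top"
    and Dinf_nz: "\<And>i. Dinf $ i \<noteq> 0"
begin

lemma Delta_tendsto: "((\<lambda>t. Delta t $ k) \<longlongrightarrow> Dinf $ k) at_top"
  using tendsto_vec_nth[OF Delta_lim] by (simp add: Delta_def)

lemma Dinf_pos: "Dinf $ k > 0"
proof -
  have "Dinf $ k \<ge> 0"
    by (rule tendsto_lowerbound[OF Delta_tendsto])
      (use trivial_limit_at_top_linorder in \<open>simp_all add: Delta_def\<close>)
  then show ?thesis
    using Dinf_nz[of k] by simp
qed

lemma component_bound:
  obtains B where "B > 0" "\<And>t k. t \<ge> (0::real) \<Longrightarrow> \<bar>u t $ k\<bar> \<le> B \<and> \<bar>v t $ k\<bar> \<le> B"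
proof -
  obtain Bu where Bu: "\<And>t. t \<ge> 0 \<Longrightarrow> norm (u t) \<le> Bu"
    using bdd_u unfolding bounded_iff by auto
  obtain Bv where Bv: "\<And>t. t \<ge> 0 \<Longrightarrow> norm (v t) \<le> Bv"
    using bdd_v unfolding bounded_iff by auto
  show ?thesis
  proof (rule that[of "max 1 (max Bu Bv)"])
    fix t :: real and k
    assume "t \<ge> 0"
    then show "\<bar>u t $ k\<bar> \<le> max 1 (max Bu Bv) \<and> \<bar>v t $ k\<bar> \<le> max 1 (max Bu Bv)"
      using Bu Bv component_le_norm_cart[of "u t" k] component_le_norm_cart[of "v t" k] by fastforce
  qed simp
qed

lemma grad_tendsto_0: "(grad \<longlongrightarrow> 0) at_top"
proof (rule vec_tendstoI)
  fix k
  let ?r = "\<lambda>t. sqrt (2 / Dinf $ k * ((grad t $ k * u t $ k)\<^sup>2 + (grad t $ k * v t $ k)\<^sup>2))"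
  have "(?r \<longlongrightarrow> sqrt (2 / Dinf $ k * (0\<^sup>2 + 0\<^sup>2))) at_top"
    using tendsto_vec_nth[OF grad_mult_u_tendsto_0, of k] tendsto_vec_nth[OF grad_mult_v_tendsto_0, of k]
    by (intro tendsto_intros) auto
  have "eventually (\<lambda>t. Dinf $ k / 2 < Delta t $ k) at_top"
    using Dinf_pos[of k] by (intro order_tendstoD(1)[OF Delta_tendsto]) simp
  then have "eventually (\<lambda>t. norm (grad t $ k) \<le> ?r t) at_top"
  proof eventually_elim
    case (elim t)
    then have "Dinf $ k / 2 \<le> (u t $ k)\<^sup>2 + (v t $ k)\<^sup>2"
      using abs_triangle_ineq4[of "(u t $ k)\<^sup>2" "(v t $ k)\<^sup>2"] by (simp add: Delta_def)
    then have "(grad t $ k)\<^sup>2 * (Dinf $ k / 2) \<le> (grad t $ k)\<^sup>2 * ((u t $ k)\<^sup>2 + (v t $ k)\<^sup>2)"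
      by (intro mult_left_mono) auto
    then have "(grad t $ k)\<^sup>2 \<le> 2 / Dinf $ k * ((grad t $ k * u t $ k)\<^sup>2 + (grad t $ k * v t $ k)\<^sup>2)"
      using Dinf_pos[of k] by (simp add: field_simps)
    then show ?case
      by (simp add: real_le_rsqrt)
  qed
  with \<open>(?r \<longlongrightarrow> sqrt (2 / Dinf $ k * (0\<^sup>2 + 0\<^sup>2))) at_top\<close>
  show "((\<lambda>t. grad t $ k) \<longlongrightarrow> 0 $ k) at_top"
    by (auto intro: Lim_null_comparison)
qed

lemma sum_diff_eventually_bounded_below:
  obtains c where "c > 0"
    "eventually (\<lambda>t. \<forall>k. c < \<bar>u t $ k + v t $ k\<bar> \<and> c < \<bar>u t $ k - v t $ k\<bar>) at_top"
proof -
  obtain B where B: "B > 0" "\<And>t k. t \<ge> 0 \<Longrightarrow> \<bar>u t $ k\<bar> \<le> B \<and> \<bar>v t $ k\<bar> \<le> B"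
    using component_bound by blast
  define d where "d = Min (range (\<lambda>k. Dinf $ k))"
  have d: "d > 0" "\<And>k. d \<le> Dinf $ k"
    unfolding d_def using Dinf_pos by auto
  have "eventually (\<lambda>t. \<forall>k. d / 2 < Delta t $ k) at_top"
  proof (intro eventually_all_finite allI order_tendstoD(1)[OF Delta_tendsto])
    show "d / 2 < Dinf $ k" for k
      using d(1) d(2)[of k] by linarith
  qed
  then have "eventually (\<lambda>t. \<forall>k. d / 2 / (2 * B) < \<bar>u t $ k + v t $ k\<bar> \<and>
      d / 2 / (2 * B) < \<bar>u t $ k - v t $ k\<bar>) at_top"
    using eventually_ge_at_top[of 0]
  proof eventually_elim
    case (elim t)
    show ?case
    proof
      fix k
      have "(u t $ k + v t $ k) * (u t $ k - v t $ k) = (u t $ k)\<^sup>2 - (v t $ k)\<^sup>2"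
        by (simp add: power2_eq_square algebra_simps)
      then have "d / 2 < \<bar>(u t $ k + v t $ k) * (u t $ k - v t $ k)\<bar>"
        using elim by (simp add: Delta_def)
      moreover have "\<bar>u t $ k + v t $ k\<bar> \<le> 2 * B" "\<bar>u t $ k - v t $ k\<bar> \<le> 2 * B"
        using B(2)[OF elim(2), of k] by linarith+
      ultimately show "d / 2 / (2 * B) < \<bar>u t $ k + v t $ k\<bar> \<and> d / 2 / (2 * B) < \<bar>u t $ k - v t $ k\<bar>"
        using B(1) by (intro abs_mult_gt_imp_factors_gt) auto
    qed
  qed
  then show ?thesis
    using d B by (intro that[of "d / 2 / (2 * B)"]) auto
qed

lemma G_plus_rho_component_converges: "\<exists>K. ((\<lambda>t. G t $ k + rho t $ k) \<longlongrightarrow> K) at_top"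
proof -
  obtain c where c: "c > 0"
    and "eventually (\<lambda>t. \<forall>k. c < \<bar>u t $ k + v t $ k\<bar> \<and> c < \<bar>u t $ k - v t $ k\<bar>) at_top"
    by (rule sum_diff_eventually_bounded_below)
  then obtain T where T: "T \<ge> 0" "\<And>t. t \<ge> T \<Longrightarrow> c < \<bar>u t $ k + v t $ k\<bar> \<and> c < \<bar>u t $ k - v t $ k\<bar>"
    unfolding eventually_at_top_linorder by (metis max.cobounded1 max.boundedE)
  have d: "((\<lambda>t. f t $ k) has_real_derivative f' t $ k) (at t within {T..})"
    if "\<And>t. t \<ge> 0 \<Longrightarrow> (f has_vector_derivative f' t) (at t within {0..})" "t \<ge> T"
    for f f' t
    using has_real_derivative_vec_nth[OF that(1)[of t]] that(2) T(1)
    by (auto intro: has_field_derivative_subset)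
  have ode: "lam * u'' t $ k + u' t $ k + grad t $ k * v t $ k = 0"
    "lam * v'' t $ k + v' t $ k + grad t $ k * u t $ k = 0" if "t \<ge> T" for t
    using arg_cong[OF lam_u''[of t], of "\<lambda>z. z $ k"] arg_cong[OF lam_v''[of t], of "\<lambda>z. z $ k"] that T(1)
    by auto
  have "\<exists>K. ((\<lambda>t. G t $ k + ln \<bar>u t $ k + v t $ k\<bar>) \<longlongrightarrow> K) at_top"
  proof (rule antiderivative_plus_ln_abs_converges[OF lam_pos c])
    show "((\<lambda>t. G t $ k) has_real_derivative grad t $ k) (at t within {T..})" if "t \<ge> T" for t
      using d[OF G_has_vector_derivative that] .
    show "((\<lambda>t. u t $ k + v t $ k) has_real_derivative u' t $ k + v' t $ k) (at t within {T..})"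
      "((\<lambda>t. u' t $ k + v' t $ k) has_real_derivative u'' t $ k + v'' t $ k) (at t within {T..})"
      "((\<lambda>t. u t $ k - v t $ k) has_real_derivative u' t $ k - v' t $ k) (at t within {T..})"
      "((\<lambda>t. u' t $ k - v' t $ k) has_real_derivative u'' t $ k - v'' t $ k) (at t within {T..})"
      if "t \<ge> T" for t
      using d[OF du that] d[OF dv that] d[OF ddu that] d[OF ddv that] by (auto intro: DERIV_add DERIV_diff)
    show "lam * (u'' t $ k + v'' t $ k) + (u' t $ k + v' t $ k) + grad t $ k * (u t $ k + v t $ k) = 0"
      "lam * (u'' t $ k - v'' t $ k) + (u' t $ k - v' t $ k) - grad t $ k * (u t $ k - v t $ k) = 0"
      if "t \<ge> T" for t
      using ode[OF that] by (simp_all add: algebra_simps)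
    show "c \<le> \<bar>u t $ k + v t $ k\<bar>" "c \<le> \<bar>u t $ k - v t $ k\<bar>" if "t \<ge> T" for t
      using T(2)[OF that] by simp_all
    show "((\<lambda>t. u' t $ k + v' t $ k) \<longlongrightarrow> 0) at_top" "((\<lambda>t. u' t $ k - v' t $ k) \<longlongrightarrow> 0) at_top"
      using tendsto_add[OF tendsto_vec_nth[OF u'_tendsto_0] tendsto_vec_nth[OF v'_tendsto_0], of k]
        tendsto_diff[OF tendsto_vec_nth[OF u'_tendsto_0] tendsto_vec_nth[OF v'_tendsto_0], of k]
      by simp_all
  qed
  then show ?thesis
    by (simp add: rho_def)
qed

lemma G_plus_rho_converges: "\<exists>K. ((\<lambda>t. G t + rho t) \<longlongrightarrow> K) at_top"
proof -
  obtain K where "\<And>k. ((\<lambda>t. G t $ k + rho t $ k) \<longlongrightarrow> K k) at_top"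
    using G_plus_rho_component_converges by metis
  then have "((\<lambda>t. G t + rho t) \<longlongrightarrow> (\<chi> k. K k)) at_top"
    by (intro vec_tendstoI) simp
  then show ?thesis
    by blast
qed

lemma rho_eventually_bounded:
  obtains T where "bounded (rho ` {T..})" "\<And>t k. t \<ge> T \<Longrightarrow> u t $ k + v t $ k \<noteq> 0"
proof -
  obtain B where B: "B > 0" "\<And>t k. t \<ge> 0 \<Longrightarrow> \<bar>u t $ k\<bar> \<le> B \<and> \<bar>v t $ k\<bar> \<le> B"
    using component_bound by blast
  obtain c where c: "c > 0"
    and "eventually (\<lambda>t. \<forall>k. c < \<bar>u t $ k + v t $ k\<bar> \<and> c < \<bar>u t $ k - v t $ k\<bar>) at_top"
    by (rule sum_diff_eventually_bounded_below)
  then obtain T where T: "T \<ge> 0" "\<And>t k. t \<ge> T \<Longrightarrow> c < \<bar>u t $ k + v t $ k\<bar>"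
    unfolding eventually_at_top_linorder by (metis max.cobounded1 max.boundedE)
  define M where "M = \<bar>ln c\<bar> + \<bar>ln (2 * B)\<bar>"
  have rho_bound: "- M \<le> rho t $ k \<and> rho t $ k \<le> M" if "t \<ge> T" for t k
  proof -
    have "c \<le> \<bar>u t $ k + v t $ k\<bar>" "\<bar>u t $ k + v t $ k\<bar> \<le> 2 * B"
      using T(2)[OF that, of k] B(2)[of t k] T(1) that by auto
    then have "ln c \<le> rho t $ k" "rho t $ k \<le> ln (2 * B)"
      using c by (auto simp: rho_def)
    then show ?thesis
      unfolding M_def by linarith
  qed
  then have "rho ` {T..} \<subseteq> cbox (- (\<chi> k. M)) (\<chi> k. M)"
    by (auto simp: mem_box_cart)
  then have "bounded (rho ` {T..})"
    by (rule bounded_subset[OF bounded_cbox])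
  moreover have "u t $ k + v t $ k \<noteq> 0" if "t \<ge> T" for t k
    using T(2)[OF that, of k] c by auto
  ultimately show ?thesis
    by (rule that)
qed

lemma sequential_limit_of_rho:
  assumes K: "((\<lambda>t. G t + rho t) \<longlongrightarrow> K) at_top"
    and s: "filterlim s at_top sequentially" and lim: "(\<lambda>n. rho (s n)) \<longlonglongrightarrow> \<alpha>"
  shows "gradL x y (theta_of Dinf \<alpha>) = 0" and "(\<lambda>n. G (s n)) \<longlonglongrightarrow> K - \<alpha>"
proof -
  obtain T where "bounded (rho ` {T..})" and T: "\<And>t k. t \<ge> T \<Longrightarrow> u t $ k + v t $ k \<noteq> 0"
    using rho_eventually_bounded by metis
  have "(\<lambda>n. theta_of (Delta (s n)) (rho (s n))) \<longlonglongrightarrow> theta_of Dinf \<alpha>"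
  proof (rule vec_tendstoI)
    fix k
    have D: "(\<lambda>n. Delta (s n) $ k) \<longlonglongrightarrow> Dinf $ k" and R: "(\<lambda>n. rho (s n) $ k) \<longlonglongrightarrow> \<alpha> $ k"
      using filterlim_compose[OF Delta_tendsto s] tendsto_vec_nth[OF lim] .
    show "(\<lambda>n. theta_of (Delta (s n)) (rho (s n)) $ k) \<longlonglongrightarrow> theta_of Dinf \<alpha> $ k"
      unfolding theta_of_def by (simp, intro D R tendsto_intros) simp
  qed
  moreover have "eventually (\<lambda>n. theta_of (Delta (s n)) (rho (s n)) = theta (s n)) sequentially"
    using filterlim_at_top[THEN iffD1, OF s, rule_format, of T]
    by eventually_elim (simp add: T theta_eq_theta_of)
  ultimately have "(\<lambda>n. theta (s n)) \<longlonglongrightarrow> theta_of Dinf \<alpha>"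
    by (rule Lim_transform_eventually)
  then have "(\<lambda>n. grad (s n)) \<longlonglongrightarrow> gradL x y (theta_of Dinf \<alpha>)"
    unfolding grad_def by (rule continuous_on_tendsto_compose[OF continuous_on_gradL[of UNIV]]) auto
  moreover have "(\<lambda>n. grad (s n)) \<longlonglongrightarrow> 0"
    using filterlim_compose[OF grad_tendsto_0 s] .
  ultimately show "gradL x y (theta_of Dinf \<alpha>) = 0"
    by (rule LIMSEQ_unique)
  have "(\<lambda>n. (G (s n) + rho (s n)) - rho (s n)) \<longlonglongrightarrow> K - \<alpha>"
    by (intro tendsto_diff filterlim_compose[OF K s] lim)
  then show "(\<lambda>n. G (s n)) \<longlonglongrightarrow> K - \<alpha>"
    by simp
qed

lemma rho_converges: "\<exists>\<alpha>. (rho \<longlongrightarrow> \<alpha>) at_top"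
proof -
  obtain K where K: "((\<lambda>t. G t + rho t) \<longlongrightarrow> K) at_top"
    using G_plus_rho_converges ..
  obtain T where "bounded (rho ` {T..})"
    using rho_eventually_bounded by metis
  then show ?thesis
  proof (rule tendsto_at_top_if_unique_sequential_limit)
    fix s s' \<alpha> \<beta>
    assume s: "filterlim s at_top sequentially" "(\<lambda>n. rho (s n)) \<longlonglongrightarrow> \<alpha>"
      and s': "filterlim s' at_top sequentially" "(\<lambda>n. rho (s' n)) \<longlonglongrightarrow> \<beta>"
    define e where "e = theta_of Dinf \<alpha> - theta_of Dinf \<beta>"
    have orth: "x j \<bullet> e = 0" for j
      unfolding e_def
      by (rule gradL_eq_imp_orthogonal[where y = y])
        (simp add: sequential_limit_of_rho(1)[OF K s] sequential_limit_of_rho(1)[OF K s'])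
    have "eventually (\<lambda>n. (G (s n) - G (s' n)) \<bullet> e = 0) sequentially"
      using filterlim_at_top[THEN iffD1, OF s(1), rule_format, of 0]
        filterlim_at_top[THEN iffD1, OF s'(1), rule_format, of 0]
      by eventually_elim (simp add: inner_diff_left inner_G_eq_0 orth)
    then have "(\<lambda>n. (G (s n) - G (s' n)) \<bullet> e) \<longlonglongrightarrow> 0"
      by (rule tendsto_eventually)
    moreover have "(\<lambda>n. (G (s n) - G (s' n)) \<bullet> e) \<longlonglongrightarrow> ((K - \<alpha>) - (K - \<beta>)) \<bullet> e"
      by (intro tendsto_intros sequential_limit_of_rho(2)[OF K s] sequential_limit_of_rho(2)[OF K s'])
    ultimately have "((K - \<alpha>) - (K - \<beta>)) \<bullet> e = 0"
      by (rule LIMSEQ_unique[rotated])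
    then have "(\<alpha> - \<beta>) \<bullet> (theta_of Dinf \<alpha> - theta_of Dinf \<beta>) = 0"
      unfolding e_def by (simp add: inner_diff_left)
    then show "\<alpha> = \<beta>"
      by (rule theta_of_inner_eq_0_imp_eq)
  qed
qed

lemma G_converges: "\<exists>I. (G \<longlongrightarrow> I) at_top"
proof -
  obtain K \<alpha> where "((\<lambda>t. G t + rho t) \<longlongrightarrow> K) at_top" "(rho \<longlongrightarrow> \<alpha>) at_top"
    using G_plus_rho_converges rho_converges by blast
  then have "((\<lambda>t. (G t + rho t) - rho t) \<longlongrightarrow> K - \<alpha>) at_top"
    by (rule tendsto_diff)
  then have "(G \<longlongrightarrow> K - \<alpha>) at_top"
    by simp
  then show ?thesis
    by blast
qed

end

theorem lemma3:
  fixes x :: "'n::finite \<Rightarrow> real^'d::finite" and y :: "'n \<Rightarrow> real"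
    and lam :: real
    and u v u' v' u'' v'' :: "real \<Rightarrow> real^'d"
  assumes lam_pos: "lam > 0"
    and du: "\<And>t. t \<ge> 0 \<Longrightarrow> (u has_vector_derivative u' t) (at t within {0..})"
    and dv: "\<And>t. t \<ge> 0 \<Longrightarrow> (v has_vector_derivative v' t) (at t within {0..})"
    and ddu: "\<And>t. t \<ge> 0 \<Longrightarrow> (u' has_vector_derivative u'' t) (at t within {0..})"
    and ddv: "\<And>t. t \<ge> 0 \<Longrightarrow> (v' has_vector_derivative v'' t) (at t within {0..})"
    and ode_u: "\<And>t. t \<ge> 0 \<Longrightarrow> lam *\<^sub>R u'' t + u' t + gradL x y (u t * v t) * v t = 0"
    and ode_v: "\<And>t. t \<ge> 0 \<Longrightarrow> lam *\<^sub>R v'' t + v' t + gradL x y (u t * v t) * u t = 0"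
    and init_vel: "u' 0 = 0" "v' 0 = 0"
    and init_Delta: "\<And>i. \<bar>(u 0 $ i)\<^sup>2 - (v 0 $ i)\<^sup>2\<bar> \<noteq> 0"
    and bdd_u: "bounded (u ` {0..})"
    and bdd_v: "bounded (v ` {0..})"
    and Delta_lim: "((\<lambda>t. \<chi> i. \<bar>(u t $ i)\<^sup>2 - (v t $ i)\<^sup>2\<bar>) \<longlongrightarrow> Dinf) at_top"
    and Dinf_nz: "\<And>i. Dinf $ i \<noteq> 0"
  shows "(\<exists>I. ((\<lambda>t. integral {0..t} (\<lambda>s. gradL x y (u s * v s))) \<longlongrightarrow> I) at_top)
    \<and> ((\<lambda>t. integral {0..t} (\<lambda>s. exp (- (t - s) / lam) *\<^sub>R gradL x y (u s * v s))) \<longlongrightarrow> 0) at_top"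
proof -
  interpret momentum_flow_nondegenerate x y lam u v u' v' u'' v'' Dinf
    by unfold_locales (fact lam_pos du dv ddu ddv ode_u ode_v bdd_u bdd_v Delta_lim Dinf_nz)+
  have "\<exists>I. (G \<longlongrightarrow> I) at_top"
    by (rule G_converges)
  moreover have "((\<lambda>t. integral {0..t} (\<lambda>s. exp (- (t - s) / lam) *\<^sub>R grad s)) \<longlongrightarrow> 0) at_top"
    by (rule exp_convolution_tendsto_0_cart[OF lam_pos continuous_on_grad grad_tendsto_0])
  ultimately show ?thesis
    unfolding G_def grad_def theta_def by simp
qed

end
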